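(* Let $p_1,p_2$ be non-negative integers with $p_1+p_2$ odd. Then $$\sum_{j_1=0}^{p_1}\sum_{j_2=0}^{p_2}\binom{p_1}{j_1}\binom{p_2}{j_2}(-1)^{j_1+j_2}B_{p_1-j_1}B_{p_2-j_2}B_{j_1+j_2}=0,$$ where $B_j$ are the Bernoulli numbers.
   Context: The Bernoulli numbers $B_j$ are defined by $\frac{t}{e^t-1}=\sum_{j\ge0}B_j\frac{t^j}{j!}$ (so $B_1=-1/2$). *)

theory Defs
  imports "HOL-Computational_Algebra.Formal_Power_Series"
begin

definition bernoulli :: "nat \<Rightarrow> rat" where
  "bernoulli j = fact j * fps_nth (fps_X / (fps_exp 1 - 1)) j"

end

theory Submission
  imports Defs
begin

text \<open>Let B(t) = t/(e^t - 1), so that B(-t) = B(t) + t. The sum in question is p1! p2! times the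
  coefficient of x^p1 y^p2 in F(x,y) = B(x) B(y) B(-(x+y)). Both F(x,y) and F(-x,-y) = B(-x) B(-y) B(x+y)
  equal x y (x+y) e^(x+y) / ((e^x - 1) (e^y - 1) (e^(x+y) - 1)), so F is even and its coefficients of
  odd total degree vanish.\<close>

unbundle fps_syntax

definition bernoulli_fps :: "rat fps" where
  "bernoulli_fps = fps_X / (fps_exp 1 - 1)"

lemma fps_nth_bernoulli_fps: "bernoulli_fps $ n = bernoulli n / fact n"
  by (simp add: bernoulli_def bernoulli_fps_def)

lemma fps_exp_minus_1_neq_0: "fps_exp (c::'a::field_char_0) - 1 \<noteq> 0 \<longleftrightarrow> c \<noteq> 0"
proof
  assume "fps_exp c - 1 \<noteq> 0"
  then show "c \<noteq> 0" by auto
next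
  assume "c \<noteq> 0"
  then have "(fps_exp c - 1) $ 1 \<noteq> 0" by simp
  then show "fps_exp c - 1 \<noteq> 0" by auto
qed

lemma bernoulli_fps_mult_exp_minus_1: "bernoulli_fps * (fps_exp 1 - 1) = fps_X"
proof -
  have nz: "fps_exp (1::rat) - 1 \<noteq> 0"
    by (simp add: fps_exp_minus_1_neq_0)
  have "subdegree (fps_exp (1::rat) - 1) = 1"
    by (rule subdegreeI) auto
  then have "(fps_exp 1 - 1) dvd (fps_X :: rat fps)"
    by (simp add: fps_dvd_iff[OF nz])
  then show ?thesis
    unfolding bernoulli_fps_def by simp
qed

lemma bernoulli_fps_compose_uminus: "bernoulli_fps oo (- fps_X) = bernoulli_fps + fps_X"
proof -
  let ?B = bernoulli_fps and ?E = "fps_exp (1::rat)"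
  let ?R = "?B oo (- fps_X)"
  have "(?B * (?E - 1)) oo (- fps_X) = ?R * (fps_exp (-1) - 1)"
    by (simp add: fps_compose_mult_distrib fps_compose_sub_distrib)
  then have R: "?R * (fps_exp (-1) - 1) = - fps_X"
    by (simp add: bernoulli_fps_mult_exp_minus_1)
  have "fps_exp (-1) * ?E = 1"
    using fps_exp_add_mult[of "-1::rat" 1] by simp
  then have "?R * fps_exp (-1) * ?E = ?R"
    by (simp add: mult.assoc)
  then have "?R * (?E - 1) = - (?R * (fps_exp (-1) - 1)) * ?E"
    by (simp add: left_diff_distrib right_diff_distrib)
  also have "\<dots> = fps_X * ?E"
    by (simp add: R)
  also have "\<dots> = (?B + fps_X) * (?E - 1)"
    using bernoulli_fps_mult_exp_minus_1 by (simp add: algebra_simps)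
  finally have "?R * (?E - 1) = (?B + fps_X) * (?E - 1)" .
  then show ?thesis
    using fps_exp_minus_1_neq_0[of "1::rat"] by simp
qed

lemma sum_binomial_Suc:
  fixes g :: "nat \<Rightarrow> 'a::comm_semiring_1"
  shows "(\<Sum>k=0..Suc m. of_nat (Suc m choose k) * g k)
       = (\<Sum>k=0..m. of_nat (m choose k) * g k) + (\<Sum>k=0..m. of_nat (m choose k) * g (Suc k))"
proof -
  have "(\<Sum>k=0..Suc m. of_nat (Suc m choose k) * g k)
      = g 0 + (\<Sum>k=0..m. of_nat (Suc m choose Suc k) * g (Suc k))"
    by (subst sum.atLeast0_atMost_Suc_shift) simp
  also have "\<dots> = (\<Sum>k=0..m. of_nat (m choose k) * g (Suc k))
      + (g 0 + (\<Sum>k=0..m. of_nat (m choose Suc k) * g (Suc k)))"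
    by (simp add: sum.distrib algebra_simps)
  also have "g 0 + (\<Sum>k=0..m. of_nat (m choose Suc k) * g (Suc k))
      = (\<Sum>k=0..Suc m. of_nat (m choose k) * g k)"
    by (subst sum.atLeast0_atMost_Suc_shift) simp
  also have "\<dots> = (\<Sum>k=0..m. of_nat (m choose k) * g k)"
    by (simp add: binomial_eq_0)
  finally show ?thesis
    by (simp add: add.commute)
qed

lemma vandermonde_double_sum:
  fixes f :: "nat \<Rightarrow> 'a::comm_semiring_1"
  shows "(\<Sum>i=0..n. of_nat (n choose i) * (\<Sum>k=0..m. of_nat (m choose k) * f (i + k)))
       = (\<Sum>s=0..n+m. of_nat ((n + m) choose s) * f s)"
proof (induction m arbitrary: f)
  case 0
  then show ?case by simp
next
  case (Suc m)
  have "(\<Sum>i=0..n. of_nat (n choose i) * (\<Sum>k=0..Suc m. of_nat (Suc m choose k) * f (i + k)))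
     = (\<Sum>i=0..n. of_nat (n choose i) * (\<Sum>k=0..m. of_nat (m choose k) * f (i + k)))
     + (\<Sum>i=0..n. of_nat (n choose i) * (\<Sum>k=0..m. of_nat (m choose k) * f (Suc (i + k))))"
    by (simp only: sum_binomial_Suc distrib_left sum.distrib add_Suc_right)
  also have "\<dots> = (\<Sum>s=0..n+m. of_nat ((n + m) choose s) * f s)
                  + (\<Sum>s=0..n+m. of_nat ((n + m) choose s) * f (Suc s))"
    using Suc.IH[of f] Suc.IH[of "\<lambda>j. f (Suc j)"] by simp
  also have "\<dots> = (\<Sum>s=0..Suc (n + m). of_nat (Suc (n + m) choose s) * f s)"
    by (simp only: sum_binomial_Suc)
  finally show ?case
    by simp
qed

lemma binomial_fact_add: "fact k * fact l * ((k + l) choose k) = fact (k + l)"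
  using binomial_fact_lemma[of k "k + l"] by simp

lemma binomial_mult_binomial_fact:
  assumes "a \<le> n" "c \<le> m"
  shows "((a + c) choose a) * ((n - a + (m - c)) choose (n - a)) * fact n * fact m
       = (n choose a) * (m choose c) * fact (a + c) * fact (n + m - (a + c))"
proof -
  obtain a' c' where n: "n = a + a'" and m: "m = c + c'"
    using assms le_Suc_ex by blast
  have "((a + c) choose a) * ((a' + c') choose a') * fact (a + a') * fact (c + c')
        * (fact a * fact a' * fact c * fact c')
      = (fact a * fact c * ((a + c) choose a)) * (fact a' * fact c' * ((a' + c') choose a'))
        * fact (a + a') * fact (c + c')"
    by (simp only: ac_simps)
  also have "\<dots> = (fact a * fact a' * ((a + a') choose a)) * (fact c * fact c' * ((c + c') choose c))
        * fact (a + c) * fact (a' + c')"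
    unfolding binomial_fact_add by (simp only: ac_simps)
  also have "\<dots> = ((a + a') choose a) * ((c + c') choose c) * fact (a + c) * fact (a' + c')
        * (fact a * fact a' * fact c * fact c')"
    by (simp only: ac_simps)
  finally show ?thesis
    by (simp add: n m)
qed

lemma fps_const_sum: "fps_const (sum f A) = (\<Sum>x\<in>A. fps_const (f x) :: 'a::comm_ring_1 fps)"
  by (induction A rule: infinite_finite_induct) (simp_all flip: fps_const_add)

text \<open>Bivariate series are series in \<open>x\<close> over \<open>'a fps\<close> in \<open>y\<close>: \<open>fps_const f\<close> is \<open>f(y)\<close>,
  \<open>fps_in_x f\<close> is \<open>f(x)\<close> and \<open>fps_in_x_plus_y f\<close> is \<open>f(x+y)\<close>. The last cannot be written with
  \<open>oo\<close>, since \<open>x + y\<close> has the nonzero constant term \<open>y\<close> as a series in \<open>x\<close>.\<close>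

definition fps_in_x :: "'a::comm_ring_1 fps \<Rightarrow> 'a fps fps" where
  "fps_in_x f = Abs_fps (\<lambda>n. fps_const (f $ n))"

definition fps_in_x_plus_y :: "'a::comm_ring_1 fps \<Rightarrow> 'a fps fps" where
  "fps_in_x_plus_y f = Abs_fps (\<lambda>n. Abs_fps (\<lambda>m. of_nat ((n + m) choose n) * f $ (n + m)))"

lemma fps_in_x_nth [simp]: "fps_in_x f $ n = fps_const (f $ n)"
  by (simp add: fps_in_x_def)

lemma fps_in_x_plus_y_nth [simp]: "fps_in_x_plus_y f $ n $ m = of_nat ((n + m) choose n) * f $ (n + m)"
  by (simp add: fps_in_x_plus_y_def)

lemma fps_in_x_add: "fps_in_x (f + g) = fps_in_x f + fps_in_x g"
  by (simp add: fps_eq_iff)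

lemma fps_in_x_diff: "fps_in_x (f - g) = fps_in_x f - fps_in_x g"
  by (simp add: fps_eq_iff)

lemma fps_in_x_mult: "fps_in_x (f * g) = fps_in_x f * fps_in_x g"
  by (simp add: fps_eq_iff fps_mult_nth fps_const_sum)

lemma fps_in_x_1: "fps_in_x 1 = 1"
  by (simp add: fps_eq_iff)

lemma fps_in_x_X: "fps_in_x fps_X = fps_X"
  by (simp add: fps_eq_iff fps_X_def)

lemma fps_in_x_eq_0_iff: "fps_in_x f = 0 \<longleftrightarrow> f = 0"
  by (simp add: fps_eq_iff)

lemma fps_in_x_plus_y_add: "fps_in_x_plus_y (f + g) = fps_in_x_plus_y f + fps_in_x_plus_y g"
  by (simp add: fps_eq_iff algebra_simps)

lemma fps_in_x_plus_y_diff: "fps_in_x_plus_y (f - g) = fps_in_x_plus_y f - fps_in_x_plus_y g"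
  by (simp add: fps_eq_iff algebra_simps)

lemma fps_in_x_plus_y_1: "fps_in_x_plus_y 1 = 1"
  by (simp add: fps_eq_iff)

lemma fps_in_x_plus_y_X: "fps_in_x_plus_y fps_X = fps_X + fps_const fps_X"
proof (rule fps_ext, rule fps_ext)
  fix n m
  show "fps_in_x_plus_y fps_X $ n $ m = (fps_X + fps_const fps_X) $ n $ m"
    by (cases n; cases m) (auto simp: fps_X_def)
qed

lemma fps_in_x_plus_y_eq_0_iff: "fps_in_x_plus_y f = 0 \<longleftrightarrow> f = 0"
proof
  assume "fps_in_x_plus_y f = 0"
  then have "fps_in_x_plus_y f $ n $ 0 = 0" for n
    by simp
  then show "f = 0"
    by (simp add: fps_eq_iff)
qed (simp add: fps_eq_iff)

lemma fps_in_x_plus_y_exp: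
  "fps_in_x_plus_y (fps_exp (c::'a::field_char_0)) = fps_in_x (fps_exp c) * fps_const (fps_exp c)"
proof (rule fps_ext, rule fps_ext)
  fix n m
  show "fps_in_x_plus_y (fps_exp c) $ n $ m = (fps_in_x (fps_exp c) * fps_const (fps_exp c)) $ n $ m"
    by (simp add: binomial_fact power_add)
qed

lemma fps_in_x_plus_y_mult:
  fixes f g :: "'a::field_char_0 fps"
  shows "fps_in_x_plus_y (f * g) = fps_in_x_plus_y f * fps_in_x_plus_y g"
proof (rule fps_ext, rule fps_ext)
  fix n m
  define H where "H s = fact s * f $ s * (fact (n + m - s) * g $ (n + m - s))" for s
  have "(fps_in_x_plus_y f * fps_in_x_plus_y g) $ n $ m
      = (\<Sum>a=0..n. \<Sum>c=0..m. fps_in_x_plus_y f $ a $ c * fps_in_x_plus_y g $ (n - a) $ (m - c))"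
    by (simp add: fps_mult_nth fps_sum_nth)
  also have "\<dots> = (\<Sum>a=0..n. of_nat (n choose a) * (\<Sum>c=0..m. of_nat (m choose c) * H (a + c)))
                    / (fact n * fact m)"
    unfolding sum_distrib_left sum_divide_distrib
  proof (intro sum.cong refl)
    fix a c assume "a \<in> {0..n}" "c \<in> {0..m}"
    then have a: "a \<le> n" and c: "c \<le> m" by simp_all
    have "(of_nat (((a + c) choose a) * ((n - a + (m - c)) choose (n - a)) * fact n * fact m) :: 'a)
        = of_nat ((n choose a) * (m choose c) * fact (a + c) * fact (n + m - (a + c)))"
      by (simp only: binomial_mult_binomial_fact[OF a c])
    moreover have "n + m - (a + c) = n - a + (m - c)"
      using a c by simp
    ultimately show "fps_in_x_plus_y f $ a $ c * fps_in_x_plus_y g $ (n - a) $ (m - c)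
        = of_nat (n choose a) * (of_nat (m choose c) * H (a + c)) / (fact n * fact m)"
      by (simp add: H_def field_simps)
  qed
  also have "\<dots> = (\<Sum>s=0..n+m. of_nat ((n + m) choose s) * H s) / (fact n * fact m)"
    by (simp only: vandermonde_double_sum)
  also have "\<dots> = of_nat ((n + m) choose n) * (\<Sum>s=0..n+m. f $ s * g $ (n + m - s))"
    unfolding sum_distrib_left sum_divide_distrib
  proof (intro sum.cong refl)
    fix s assume "s \<in> {0..n+m}"
    then show "of_nat ((n + m) choose s) * H s / (fact n * fact m)
        = of_nat ((n + m) choose n) * (f $ s * g $ (n + m - s))"
      by (simp add: H_def binomial_fact field_simps)
  qed
  also have "\<dots> = fps_in_x_plus_y (f * g) $ n $ m"
    by (simp add: fps_mult_nth)
  finally show "fps_in_x_plus_y (f * g) $ n $ m = (fps_in_x_plus_y f * fps_in_x_plus_y g) $ n $ m"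
    by simp
qed

lemma fact_mult_nth_egf_product:
  fixes f g h :: "'a::field_char_0 fps"
  assumes "\<And>n. f $ n = u n / fact n" "\<And>n. g $ n = v n / fact n" "\<And>n. h $ n = w n / fact n"
  shows "fact p1 * fact p2 * (fps_in_x f * fps_const g * fps_in_x_plus_y h) $ p1 $ p2
       = (\<Sum>j1=0..p1. \<Sum>j2=0..p2. of_nat (p1 choose j1) * of_nat (p2 choose j2)
            * u (p1 - j1) * v (p2 - j2) * w (j1 + j2))"
proof -
  have "(fps_in_x f * fps_const g * fps_in_x_plus_y h) $ p1
      = (\<Sum>a=0..p1. fps_const (f $ a) * g * fps_in_x_plus_y h $ (p1 - a))"
    by (simp add: fps_mult_nth[of "fps_in_x f * fps_const g"])
  then have "(fps_in_x f * fps_const g * fps_in_x_plus_y h) $ p1 $ p2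
      = (\<Sum>a=0..p1. \<Sum>c=0..p2. f $ a * g $ c * fps_in_x_plus_y h $ (p1 - a) $ (p2 - c))"
    by (simp add: fps_sum_nth fps_mult_nth[of g] sum_distrib_left mult.assoc)
  also have "\<dots> = (\<Sum>j1=0..p1. \<Sum>j2=0..p2.
                      f $ (p1 - j1) * g $ (p2 - j2) * fps_in_x_plus_y h $ j1 $ j2)"
    by (subst sum.atLeastAtMost_rev, rule sum.cong, simp,
        subst sum.atLeastAtMost_rev, rule sum.cong, auto)
  finally have coeff: "(fps_in_x f * fps_const g * fps_in_x_plus_y h) $ p1 $ p2
      = (\<Sum>j1=0..p1. \<Sum>j2=0..p2. f $ (p1 - j1) * g $ (p2 - j2) * fps_in_x_plus_y h $ j1 $ j2)" .
  show ?thesis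
    unfolding coeff sum_distrib_left
  proof (intro sum.cong refl)
    fix j1 j2 assume "j1 \<in> {0..p1}" "j2 \<in> {0..p2}"
    then show "fact p1 * fact p2 * (f $ (p1 - j1) * g $ (p2 - j2) * fps_in_x_plus_y h $ j1 $ j2)
        = of_nat (p1 choose j1) * of_nat (p2 choose j2) * u (p1 - j1) * v (p2 - j2) * w (j1 + j2)"
      by (simp add: assms binomial_fact field_simps)
  qed
qed

text \<open>Applied to \<open>a, b, c = B(x), B(y), B(x+y)\<close> and \<open>s, t = e^x, e^y\<close>, where the right-hand
  factors \<open>a + x\<close>, \<open>b + y\<close> are \<open>B(-x)\<close>, \<open>B(-y)\<close>.\<close>

lemma reflected_triple_product_eq:
  fixes a b c s t x y :: "'a::idom"
  assumes "a * (s - 1) = x" "b * (t - 1) = y" "c * (s * t - 1) = x + y"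
    and "s - 1 \<noteq> 0" "t - 1 \<noteq> 0" "s * t - 1 \<noteq> 0"
  shows "a * b * (c + (x + y)) = (a + x) * (b + y) * c"
proof -
  have "a * b * (c + (x + y)) * ((s - 1) * (t - 1) * (s * t - 1))
      = (a * (s - 1)) * (b * (t - 1)) * (c * (s * t - 1) + (x + y) * (s * t - 1))"
    by (simp add: algebra_simps)
  also have "\<dots> = x * y * (x + y) * (s * t)"
    using assms(1-3) by (simp add: algebra_simps)
  also have "\<dots> = (a * (s - 1) + x * (s - 1)) * (b * (t - 1) + y * (t - 1)) * (c * (s * t - 1))"
    using assms(1-3) by (simp add: algebra_simps)
  also have "\<dots> = (a + x) * (b + y) * c * ((s - 1) * (t - 1) * (s * t - 1))"
    by (simp add: algebra_simps)
  finally show ?thesis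
    using assms(4-6) by simp
qed

lemma bernoulli_fps_bivariate_symmetry:
  defines "B \<equiv> bernoulli_fps" and "R \<equiv> bernoulli_fps oo (- fps_X)"
  shows "fps_in_x B * fps_const B * fps_in_x_plus_y R = fps_in_x R * fps_const R * fps_in_x_plus_y B"
proof -
  let ?E = "fps_exp (1::rat)"
  have const_E: "fps_const ?E - 1 = fps_const (?E - 1)"
    by (simp add: fps_eq_iff)
  have x: "fps_in_x B * (fps_in_x ?E - 1) = fps_X"
    using arg_cong[where f = fps_in_x, OF bernoulli_fps_mult_exp_minus_1]
    by (simp add: B_def fps_in_x_mult fps_in_x_diff fps_in_x_1 fps_in_x_X)
  have y: "fps_const B * (fps_const ?E - 1) = fps_const fps_X"
    by (simp add: const_E B_def bernoulli_fps_mult_exp_minus_1)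
  have x_plus_y: "fps_in_x_plus_y B * (fps_in_x ?E * fps_const ?E - 1) = fps_X + fps_const fps_X"
    using arg_cong[where f = fps_in_x_plus_y, OF bernoulli_fps_mult_exp_minus_1]
    by (simp add: B_def fps_in_x_plus_y_mult fps_in_x_plus_y_diff fps_in_x_plus_y_1
        fps_in_x_plus_y_exp fps_in_x_plus_y_X)
  have nonzero: "fps_in_x ?E - 1 \<noteq> 0" "fps_const ?E - 1 \<noteq> 0" "fps_in_x ?E * fps_const ?E - 1 \<noteq> 0"
    using fps_in_x_eq_0_iff[of "?E - 1"] fps_in_x_plus_y_eq_0_iff[of "?E - 1"]
    by (simp_all add: const_E fps_exp_minus_1_neq_0 fps_in_x_diff fps_in_x_1 fps_in_x_plus_y_diff
        fps_in_x_plus_y_1 fps_in_x_plus_y_exp)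
  have "fps_in_x B * fps_const B * (fps_in_x_plus_y B + (fps_X + fps_const fps_X))
      = (fps_in_x B + fps_X) * (fps_const B + fps_const fps_X) * fps_in_x_plus_y B"
    by (rule reflected_triple_product_eq[OF x y x_plus_y nonzero])
  moreover have "R = B + fps_X"
    by (simp add: B_def R_def bernoulli_fps_compose_uminus)
  ultimately show ?thesis
    by (simp add: fps_in_x_add fps_in_x_X fps_in_x_plus_y_add fps_in_x_plus_y_X)
qed

lemma minus_one_power_odd_add:
  assumes "odd (k + l)"
  shows "(-1::'a::ring_1) ^ k = - ((-1) ^ l)"
  using assms by (cases "even l") (simp_all add: minus_one_power_iff)

theorem mainTheorem11:
  fixes p1 p2 :: nat
  assumes "odd (p1 + p2)"
  shows "(\<Sum>j1=0..p1. \<Sum>j2=0..p2.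
            of_nat (p1 choose j1) * of_nat (p2 choose j2) * (-1) ^ (j1 + j2)
            * bernoulli (p1 - j1) * bernoulli (p2 - j2) * bernoulli (j1 + j2)) = (0::rat)"
    (is "?S = 0")
proof -
  let ?B = bernoulli_fps and ?R = "bernoulli_fps oo (- fps_X)"
  have B: "?B $ n = bernoulli n / fact n" and R: "?R $ n = (-1) ^ n * bernoulli n / fact n" for n
    by (simp_all add: fps_nth_bernoulli_fps fps_compose_uminus')
  have "fact p1 * fact p2 * (fps_in_x ?B * fps_const ?B * fps_in_x_plus_y ?R) $ p1 $ p2 = ?S"
    unfolding fact_mult_nth_egf_product[OF B B R]
    by (intro sum.cong refl) (simp add: ac_simps)
  moreover have "fact p1 * fact p2 * (fps_in_x ?R * fps_const ?R * fps_in_x_plus_y ?B) $ p1 $ p2 = - ?S"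
    unfolding fact_mult_nth_egf_product[OF R R B] sum_negf[symmetric]
  proof (intro sum.cong refl)
    fix j1 j2 assume "j1 \<in> {0..p1}" "j2 \<in> {0..p2}"
    then have "odd ((p1 - j1) + (p2 - j2) + (j1 + j2))"
      using assms by simp
    then have "(-1::rat) ^ (p1 - j1) * (-1) ^ (p2 - j2) = - ((-1) ^ (j1 + j2))"
      by (simp add: minus_one_power_odd_add flip: power_add)
    then show "of_nat (p1 choose j1) * of_nat (p2 choose j2) * ((-1) ^ (p1 - j1) * bernoulli (p1 - j1))
        * ((-1) ^ (p2 - j2) * bernoulli (p2 - j2)) * bernoulli (j1 + j2)
        = - (of_nat (p1 choose j1) * of_nat (p2 choose j2) * (-1) ^ (j1 + j2)
           * bernoulli (p1 - j1) * bernoulli (p2 - j2) * bernoulli (j1 + j2))"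
      by (simp add: algebra_simps)
  qed
  ultimately have "?S = - ?S"
    using bernoulli_fps_bivariate_symmetry by simp
  then show ?thesis
    by simp
qed

end
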